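(* A fractional linear transformation $T$ of $\widehat{\mathbb H}$ satisfies $T(0)=0$, $T(1)=1$ and $T(\infty)=\infty$ if and only if there is $a\in\mathbb H^\times$ with $T(q)=aqa^{-1}$ for all $q$.
   Context: $\mathbb H$ denotes the quaternions, $\mathbb H^\times=\mathbb H\setminus\{0\}$, $\widehat{\mathbb H}=\mathbb H\cup\{\infty\}$. A fractional linear transformation of $\widehat{\mathbb H}$ is a map $q\mapsto(aq+b)(cq+d)^{-1}$ with $\begin{pmatrix}a&b\\c&d\end{pmatrix}\in GL(2,\mathbb H)$. *)

theory Defs
  imports Complex_Main
begin

datatype quat = Quat (Re: real) (Im1: real) (Im2: real) (Im3: real)

lemma quat_eq_iff: "x = y \<longleftrightarrow> Re x = Re y \<and> Im1 x = Im1 y \<and> Im2 x = Im2 y \<and> Im3 x = Im3 y"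
  by (cases x; cases y) auto

instantiation quat :: ab_group_add
begin
definition "0 = Quat 0 0 0 0"
definition "x + y = Quat (Re x + Re y) (Im1 x + Im1 y) (Im2 x + Im2 y) (Im3 x + Im3 y)"
definition "- x = Quat (- Re x) (- Im1 x) (- Im2 x) (- Im3 x)"
definition "x - y = Quat (Re x - Re y) (Im1 x - Im1 y) (Im2 x - Im2 y) (Im3 x - Im3 y)"
instance
  by standard (simp_all add: quat_eq_iff zero_quat_def plus_quat_def uminus_quat_def minus_quat_def)
end

instantiation quat :: ring_1
begin
definition "1 = Quat 1 0 0 0"
definition "x * y = Quat
   (Re x * Re y - Im1 x * Im1 y - Im2 x * Im2 y - Im3 x * Im3 y)
   (Re x * Im1 y + Im1 x * Re y + Im2 x * Im3 y - Im3 x * Im2 y)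
   (Re x * Im2 y - Im1 x * Im3 y + Im2 x * Re y + Im3 x * Im1 y)
   (Re x * Im3 y + Im1 x * Im2 y - Im2 x * Im1 y + Im3 x * Re y)"
instance
  by standard (simp_all add: quat_eq_iff zero_quat_def plus_quat_def one_quat_def times_quat_def algebra_simps)
end

definition qnorm2 :: "quat \<Rightarrow> real" where
  "qnorm2 x = (Re x)\<^sup>2 + (Im1 x)\<^sup>2 + (Im2 x)\<^sup>2 + (Im3 x)\<^sup>2"

lemma qnorm2_zero: "qnorm2 x = 0 \<longleftrightarrow> x = 0"
  by (cases x) (simp add: qnorm2_def zero_quat_def add_nonneg_eq_0_iff)

instantiation quat :: division_ring
begin
definition "inverse x = Quat (Re x / qnorm2 x) (- Im1 x / qnorm2 x) (- Im2 x / qnorm2 x) (- Im3 x / qnorm2 x)"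
definition "x div (y::quat) = x * inverse y"
instance
proof
  fix a :: quat assume "a \<noteq> 0"
  then have n: "qnorm2 a \<noteq> 0" by (simp add: qnorm2_zero)
  define N where "N = qnorm2 a"
  have k: "(Re a * Re a + Im1 a * Im1 a + Im2 a * Im2 a + Im3 a * Im3 a) * inverse N = 1"
    using n by (simp add: N_def qnorm2_def power2_eq_square)
  show "inverse a * a = 1"
    unfolding quat_eq_iff times_quat_def inverse_quat_def one_quat_def N_def[symmetric]
    using k by (simp add: divide_inverse algebra_simps)
  show "a * inverse a = 1"
    unfolding quat_eq_iff times_quat_def inverse_quat_def one_quat_def N_def[symmetric]
    using k by (simp add: divide_inverse algebra_simps)
next
  show "inverse (0::quat) = 0" by (simp add: inverse_quat_def zero_quat_def)
next
  fix a b :: quat show "a div b = a * inverse b" by (simp add: divide_quat_def)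
qed
end

text \<open>The point at infinity is None; a quaternion q is Some q.\<close>
type_synonym hquat = "quat option"

definition GL2 :: "quat \<Rightarrow> quat \<Rightarrow> quat \<Rightarrow> quat \<Rightarrow> bool" where
  "GL2 a b c d \<longleftrightarrow> (\<exists>a' b' c' d'.
      a * a' + b * c' = 1 \<and> a * b' + b * d' = 0 \<and> c * a' + d * c' = 0 \<and> c * b' + d * d' = 1 \<and>
      a' * a + b' * c = 1 \<and> a' * b + b' * d = 0 \<and> c' * a + d' * c = 0 \<and> c' * b + d' * d = 1)"

definition flt_map :: "quat \<Rightarrow> quat \<Rightarrow> quat \<Rightarrow> quat \<Rightarrow> hquat \<Rightarrow> hquat" where
  "flt_map a b c d z = (case z of
      None \<Rightarrow> (if c = 0 then None else Some (a * inverse c))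
    | Some q \<Rightarrow> (if c * q + d = 0 then None else Some ((a * q + b) * inverse (c * q + d))))"

definition is_flt :: "(hquat \<Rightarrow> hquat) \<Rightarrow> bool" where
  "is_flt T \<longleftrightarrow> (\<exists>a b c d. GL2 a b c d \<and> T = flt_map a b c d)"

end

theory Submission
  imports Defs
begin

text \<open>A map \<open>q \<mapsto> (aq+b)(cq+d)\<^sup>-\<^sup>1\<close> fixes \<open>\<infinity>\<close> iff \<open>c = 0\<close>, then fixes \<open>0\<close> iff \<open>b = 0\<close>, and
  then fixes \<open>1\<close> iff \<open>a = d\<close>; so it is \<open>q \<mapsto> dqd\<^sup>-\<^sup>1\<close>.\<close>

lemma flt_map_fixes_0_1_infinity_iff:
  "(flt_map a b c d (Some 0) = Some 0 \<and> flt_map a b c d (Some 1) = Some 1 \<and>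
    flt_map a b c d None = None) \<longleftrightarrow> c = 0 \<and> b = 0 \<and> a = d \<and> d \<noteq> 0"
proof
  assume fixed: "flt_map a b c d (Some 0) = Some 0 \<and> flt_map a b c d (Some 1) = Some 1 \<and>
    flt_map a b c d None = None"
  have c: "c = 0" using fixed by (auto simp: flt_map_def split: if_splits)
  have d: "d \<noteq> 0" and "b * inverse d = 0"
    using fixed by (auto simp: flt_map_def c split: if_splits)
  then have b: "b = 0" by simp
  have "a * inverse d = 1" using fixed by (auto simp: flt_map_def b c split: if_splits)
  then have "a = d" using d by (simp add: right_inverse_eq flip: divide_inverse)
  with b c d show "c = 0 \<and> b = 0 \<and> a = d \<and> d \<noteq> 0" by blast
qed (auto simp: flt_map_def)

lemma flt_map_conjugation:
  assumes "d \<noteq> 0"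
  shows "flt_map d 0 0 d None = None" and "flt_map d 0 0 d (Some q) = Some (d * q * inverse d)"
  using assms by (simp_all add: flt_map_def)

theorem mainTheorem9:
  fixes T :: "hquat \<Rightarrow> hquat"
  assumes "is_flt T"
  shows "(T (Some 0) = Some 0 \<and> T (Some 1) = Some 1 \<and> T None = None) \<longleftrightarrow>
         (\<exists>a::quat. a \<noteq> 0 \<and> T None = None \<and> (\<forall>q. T (Some q) = Some (a * q * inverse a)))"
proof
  assume "T (Some 0) = Some 0 \<and> T (Some 1) = Some 1 \<and> T None = None"
  moreover obtain a b c d where T: "T = flt_map a b c d"
    using assms unfolding is_flt_def by blast
  ultimately have "c = 0 \<and> b = 0 \<and> a = d \<and> d \<noteq> 0"
    by (simp add: flt_map_fixes_0_1_infinity_iff)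
  then show "\<exists>a. a \<noteq> 0 \<and> T None = None \<and> (\<forall>q. T (Some q) = Some (a * q * inverse a))"
    using T flt_map_conjugation by blast
qed auto

end
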